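(* Let $M\in\mathbb{N}$, $M\ge1$, and let $r$ be a strong solution of the BVP. Then $r(R)\ge0$ for all $R\in[0,1]$ and $\dot r(R)\ge0$ for all $R\in(0,1]$.
   Context: Fix constants $\gamma>0$, $s_0\ge0$, $\kappa\ge-\gamma s_0$ and a convex function $\rho\in C^\infty(\mathbb{R})$ with $\rho(s)=0$ for $s\le0$, $\rho(s)=\gamma s+\kappa$ for $s\ge s_0$, and $\rho=\rho_1$ on $[0,s_0]$ where $\rho_1$ is smooth and convex with $\rho_1(0)=0$, $\rho_1(s_0)=\gamma s_0+\kappa$. For $M\in\mathbb{N}\setminus\{0\}$ and a function $r$ on $(0,1]$ let $d(R)=\frac{Mr(R)\dot r(R)}{R}$ and $Lr(R)=\frac{M^2r}{R}-\dot r-R\ddot r$. A strong solution of the BVP is a function $r\in C([0,1])\cap C^\infty((0,1])$ with $Lr=M\rho''(d)\dot d\,r$ on $(0,1)$, $r(0)=0$ and $r(1)=1$. *)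

theory Defs
  imports "HOL-Analysis.Analysis"
begin

text \<open>C-infinity on a set S: there is a family of successive derivatives D n
  (derivatives taken within S; for S open these are ordinary derivatives,
  for S = (0,1] one-sided at the endpoint 1).\<close>
definition Cinf_derivs :: "real set \<Rightarrow> (real \<Rightarrow> real) \<Rightarrow> (nat \<Rightarrow> real \<Rightarrow> real) \<Rightarrow> bool" where
  "Cinf_derivs S f D \<longleftrightarrow> (\<forall>x\<in>S. D 0 x = f x) \<and>
     (\<forall>n. \<forall>x\<in>S. (D n has_real_derivative D (Suc n) x) (at x within S))"

definition Cinf_on :: "real set \<Rightarrow> (real \<Rightarrow> real) \<Rightarrow> bool" where
  "Cinf_on S f \<longleftrightarrow> (\<exists>D. Cinf_derivs S f D)"

definition rho_assms :: "real \<Rightarrow> real \<Rightarrow> real \<Rightarrow> (real \<Rightarrow> real) \<Rightarrow> bool" where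
  "rho_assms \<gamma> s0 \<kappa> \<rho> \<longleftrightarrow>
     \<gamma> > 0 \<and> s0 \<ge> 0 \<and> \<kappa> \<ge> - \<gamma> * s0 \<and>
     Cinf_on UNIV \<rho> \<and> convex_on UNIV \<rho> \<and>
     (\<forall>s\<le>0. \<rho> s = 0) \<and> (\<forall>s\<ge>s0. \<rho> s = \<gamma> * s + \<kappa>) \<and>
     (\<exists>\<rho>1. Cinf_on {0..s0} \<rho>1 \<and> convex_on {0..s0} \<rho>1 \<and>
        \<rho>1 0 = 0 \<and> \<rho>1 s0 = \<gamma> * s0 + \<kappa> \<and> (\<forall>s\<in>{0..s0}. \<rho> s = \<rho>1 s))"

text \<open>Strong solution r of the BVP, with Dr the family of derivatives of r on (0,1]
  (Dr 1 = r-dot, Dr 2 = r-double-dot). d(R) = M r(R) r-dot(R) / R.\<close>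
definition strong_solution :: "(real \<Rightarrow> real) \<Rightarrow> nat \<Rightarrow> (real \<Rightarrow> real) \<Rightarrow> (nat \<Rightarrow> real \<Rightarrow> real) \<Rightarrow> bool" where
  "strong_solution \<rho> M r Dr \<longleftrightarrow>
     continuous_on {0..1} r \<and> Cinf_derivs {0<..1} r Dr \<and>
     (let d = (\<lambda>R. real M * r R * Dr 1 R / R) in
       \<forall>R\<in>{0<..<1}.
         real M ^ 2 * r R / R - Dr 1 R - R * Dr 2 R
           = real M * deriv (deriv \<rho>) (d R) * deriv d R * r R) \<and>
     r 0 = 0 \<and> r 1 = 1"

end

theory Submission
  imports Defs
begin

text \<open>At a critical point R of r we have d(R) = 0, and \<rho>'' vanishes at 0 because \<rho> is
  smooth and identically zero on the left half-line. The equation then reduces to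
  R^2 r''(R) = M^2 r(R), so r'' has the sign of r at every critical point. Consequently
  r has no interior minimum with a negative value and no interior maximum with a positive
  value; since r(0) = 0 and r(1) = 1, this forces r \<ge> 0, and a point with r'(R) < 0 would
  produce a positive interior maximum of r on [0,R].\<close>

lemma DERIV_zero_if_constant_left:
  fixes f :: "real \<Rightarrow> real"
  assumes deriv: "(f has_real_derivative l) (at x)" and const: "\<forall>y\<le>x. f y = c"
  shows "l = 0"
proof (rule ccontr)
  assume "l \<noteq> 0"
  then consider "l > 0" | "l < 0" by linarith
  then show False
  proof cases
    case 1
    from DERIV_pos_inc_left[OF deriv 1] obtain e where "e > 0" "\<forall>h>0. h < e \<longrightarrow> f (x - h) < f x"
      by blast
    then have "f (x - e/2) < f x" by auto
    with const \<open>e > 0\<close> show False by auto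
  next
    case 2
    from DERIV_neg_dec_left[OF deriv 2] obtain e where "e > 0" "\<forall>h>0. h < e \<longrightarrow> f x < f (x - h)"
      by blast
    then have "f x < f (x - e/2)" by auto
    with const \<open>e > 0\<close> show False by auto
  qed
qed

lemma deriv2_zero_at_0_if_vanishing_left:
  assumes derivs: "Cinf_derivs UNIV f D" and zero: "\<forall>s\<le>0. f s = 0"
  shows "deriv (deriv f) 0 = 0"
proof -
  have D0: "D 0 = f" and DD: "\<And>n x. (D n has_real_derivative D (Suc n) x) (at x)"
    using derivs unfolding Cinf_derivs_def by auto
  have deriv_f: "deriv f = D 1"
    using DD[of 0] D0 by (simp add: DERIV_imp_deriv fun_eq_iff)
  have "\<forall>y\<le>0. D 1 y = 0"
    using DERIV_zero_if_constant_left DD[of 0] D0 zero by (metis One_nat_def order.trans)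
  then have "D 2 0 = 0"
    using DERIV_zero_if_constant_left[OF DD[of 1 0], of 0] by (simp add: numeral_2_eq_2)
  moreover have "deriv (D 1) 0 = D 2 0"
    using DD[of 1 0] by (simp add: DERIV_imp_deriv numeral_2_eq_2)
  ultimately show ?thesis using deriv_f by simp
qed

lemma second_deriv_nonpos_at_local_max:
  fixes f f' :: "real \<Rightarrow> real"
  assumes "\<delta> > 0"
    and deriv: "\<forall>t. \<bar>x - t\<bar> < \<delta> \<longrightarrow> (f has_real_derivative f' t) (at t)"
    and crit: "f' x = 0"
    and deriv2: "(f' has_real_derivative f'') (at x)"
    and max: "\<forall>t. \<bar>x - t\<bar> < \<delta> \<longrightarrow> f t \<le> f x"
  shows "f'' \<le> 0"
proof (rule ccontr)
  assume "\<not> f'' \<le> 0"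
  then obtain d where "d > 0" and inc: "\<forall>h>0. h < d \<longrightarrow> f' x < f' (x + h)"
    using DERIV_pos_inc_right[OF deriv2] by (meson not_le)
  define h where "h = min d \<delta> / 2"
  have h: "0 < h" "h < d" "h < \<delta>"
    using \<open>d > 0\<close> \<open>\<delta> > 0\<close> unfolding h_def by auto
  have "\<forall>t. x \<le> t \<and> t \<le> x + h \<longrightarrow> (f has_real_derivative f' t) (at t)"
    using deriv h by (simp add: abs_le_iff)
  then obtain z where z: "x < z" "z < x + h" "f (x + h) - f x = h * f' z"
    using MVT2[of x "x + h" f f'] h(1) by auto
  have "0 < f' z"
    using inc[rule_format, of "z - x"] z h crit by simp
  with z(3) h(1) have "f x < f (x + h)"
    by (metis diff_gt_0_iff_gt mult_pos_pos)
  moreover have "\<bar>x - (x + h)\<bar> < \<delta>" using h by simp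
  ultimately show False using max by (meson not_le)
qed

lemma strong_solution_DERIV:
  assumes "strong_solution \<rho> M r Dr" and "x \<in> {0<..<1}"
  shows "(r has_real_derivative Dr 1 x) (at x)" "(Dr 1 has_real_derivative Dr 2 x) (at x)"
proof -
  have C: "Cinf_derivs {0<..1} r Dr" using assms(1) unfolding strong_solution_def by auto
  have at_x: "at x within {0<..1} = at x"
    using assms(2) by (intro at_within_interior) auto
  have "(Dr 0 has_real_derivative Dr 1 x) (at x)"
    using C assms(2) at_x unfolding Cinf_derivs_def by (metis One_nat_def greaterThanLessThan_iff greaterThanAtMost_iff less_imp_le)
  then show "(r has_real_derivative Dr 1 x) (at x)"
    by (rule has_field_derivative_transform_within_open[where S="{0<..<1}"])
      (use assms(2) C in \<open>auto simp: Cinf_derivs_def\<close>)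
  show "(Dr 1 has_real_derivative Dr 2 x) (at x)"
    using C assms(2) at_x unfolding Cinf_derivs_def
    by (metis Suc_1 greaterThanLessThan_iff greaterThanAtMost_iff less_imp_le)
qed

lemma strong_solution_critical_point:
  assumes rho: "rho_assms \<gamma> s0 \<kappa> \<rho>" and sol: "strong_solution \<rho> M r Dr"
    and x: "x \<in> {0<..<1}" and crit: "Dr 1 x = 0"
  shows "Dr 2 x = real M ^ 2 * r x / x ^ 2"
proof -
  have "deriv (deriv \<rho>) 0 = 0"
    using rho deriv2_zero_at_0_if_vanishing_left unfolding rho_assms_def Cinf_on_def by blast
  moreover have "real M ^ 2 * r x / x - Dr 1 x - x * Dr 2 x
      = real M * deriv (deriv \<rho>) (real M * r x * Dr 1 x / x)
          * deriv (\<lambda>R. real M * r R * Dr 1 R / R) x * r x"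
    using sol x unfolding strong_solution_def Let_def by blast
  ultimately have "x * Dr 2 x = real M ^ 2 * r x / x" using crit by simp
  with x show ?thesis by (simp add: field_simps power2_eq_square)
qed

lemma strong_solution_nonneg:
  assumes rho: "rho_assms \<gamma> s0 \<kappa> \<rho>" and "M \<ge> 1" and sol: "strong_solution \<rho> M r Dr"
    and R: "R \<in> {0..1}"
  shows "r R \<ge> 0"
proof (rule ccontr)
  assume "\<not> r R \<ge> 0"
  have cont: "continuous_on {0..1} r" and "r 0 = 0" and "r 1 = 1"
    using sol unfolding strong_solution_def by auto
  obtain x where x: "x \<in> {0..1}" and min: "\<forall>y\<in>{0..1}. r x \<le> r y"
    using continuous_attains_inf[OF compact_Icc _ cont] by auto
  have "r x < 0" using min R \<open>\<not> r R \<ge> 0\<close> by fastforce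
  with x \<open>r 0 = 0\<close> \<open>r 1 = 1\<close> have x_in: "x \<in> {0<..<1}"
    by (metis atLeastAtMost_iff greaterThanLessThan_iff less_eq_real_def zero_less_one not_less)
  define \<delta> where "\<delta> = min x (1 - x)"
  have "\<delta> > 0" using x_in unfolding \<delta>_def by auto
  have near: "\<bar>x - t\<bar> < \<delta> \<Longrightarrow> t \<in> {0<..<1}" for t
    using x_in unfolding \<delta>_def by (auto simp: abs_less_iff)
  have local_min: "\<forall>t. \<bar>x - t\<bar> < \<delta> \<longrightarrow> r x \<le> r t"
    by (meson min near greaterThanLessThan_iff atLeastAtMost_iff less_imp_le)
  have crit: "Dr 1 x = 0"
    using DERIV_local_min[OF strong_solution_DERIV(1)[OF sol x_in] \<open>\<delta> > 0\<close> local_min] .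
  have "Dr 2 x < 0"
    using strong_solution_critical_point[OF rho sol x_in crit] \<open>r x < 0\<close> \<open>M \<ge> 1\<close> x_in
    by (simp add: divide_neg_pos mult_pos_neg)
  moreover have "- Dr 2 x \<le> 0"
  proof (rule second_deriv_nonpos_at_local_max[where f="\<lambda>t. - r t" and f'="\<lambda>t. - Dr 1 t"])
    show "\<forall>t. \<bar>x - t\<bar> < \<delta> \<longrightarrow> ((\<lambda>t. - r t) has_real_derivative - Dr 1 t) (at t)"
      using near strong_solution_DERIV(1)[OF sol] DERIV_minus by blast
    show "((\<lambda>t. - Dr 1 t) has_real_derivative - Dr 2 x) (at x)"
      using strong_solution_DERIV(2)[OF sol x_in] by (rule DERIV_minus)
    show "\<forall>t. \<bar>x - t\<bar> < \<delta> \<longrightarrow> - r t \<le> - r x"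
      using local_min by simp
  qed (use \<open>\<delta> > 0\<close> crit in simp_all)
  ultimately show False by simp
qed

lemma strong_solution_mono:
  assumes rho: "rho_assms \<gamma> s0 \<kappa> \<rho>" and "M \<ge> 1" and sol: "strong_solution \<rho> M r Dr"
    and R: "R \<in> {0<..1}"
  shows "Dr 1 R \<ge> 0"
proof (rule ccontr)
  assume "\<not> Dr 1 R \<ge> 0"
  then have "Dr 1 R < 0" by simp
  have cont: "continuous_on {0..1} r" and "r 0 = 0" and C: "Cinf_derivs {0<..1} r Dr"
    using sol unfolding strong_solution_def by auto
  have "(Dr 0 has_real_derivative Dr 1 R) (at R within {0<..1})"
    using C R unfolding Cinf_derivs_def by (metis One_nat_def)
  from has_real_derivative_neg_dec_left[OF this \<open>Dr 1 R < 0\<close>]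
  obtain e where "e > 0" and dec: "\<forall>h>0. R - h \<in> {0<..1} \<longrightarrow> h < e \<longrightarrow> Dr 0 R < Dr 0 (R - h)"
    by blast
  define p where "p = R - min e R / 2"
  have p: "p \<in> {0<..<R}" using \<open>e > 0\<close> R unfolding p_def by auto
  have "Dr 0 R < Dr 0 p"
    using dec[rule_format, of "min e R / 2"] p R \<open>e > 0\<close> unfolding p_def by auto
  moreover have "Dr 0 R = r R" "Dr 0 p = r p" using C R p unfolding Cinf_derivs_def by auto
  ultimately have "r R < r p" by simp
  have "continuous_on {0..R} r" using R by (intro continuous_on_subset[OF cont]) auto
  then obtain x where x: "x \<in> {0..R}" and max: "\<forall>y\<in>{0..R}. r y \<le> r x"
    using continuous_attains_sup[OF compact_Icc _ \<open>continuous_on {0..R} r\<close>] R by auto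
  have "r p \<le> r x" using max p by auto
  moreover have "r R \<ge> 0" using strong_solution_nonneg[OF rho \<open>M \<ge> 1\<close> sol] R by auto
  ultimately have "r x > 0" using \<open>r R < r p\<close> by linarith
  then have "x \<noteq> 0" using \<open>r 0 = 0\<close> by auto
  moreover have "x \<noteq> R" using \<open>r R < r p\<close> \<open>r p \<le> r x\<close> by auto
  ultimately have x_R: "0 < x" "x < R" using x by auto
  with R have x_in: "x \<in> {0<..<1}" by auto
  define \<delta> where "\<delta> = min x (R - x)"
  have "\<delta> > 0" using x_R unfolding \<delta>_def by auto
  have near: "\<bar>x - t\<bar> < \<delta> \<Longrightarrow> t \<in> {0<..<R}" for t
    using x_R unfolding \<delta>_def by (auto simp: abs_less_iff)
  have local_max: "\<forall>t. \<bar>x - t\<bar> < \<delta> \<longrightarrow> r t \<le> r x"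
    by (meson max near greaterThanLessThan_iff atLeastAtMost_iff less_imp_le)
  have deriv: "\<forall>t. \<bar>x - t\<bar> < \<delta> \<longrightarrow> (r has_real_derivative Dr 1 t) (at t)"
  proof (intro allI impI)
    fix t assume "\<bar>x - t\<bar> < \<delta>"
    with near R have "t \<in> {0<..<1}" by fastforce
    then show "(r has_real_derivative Dr 1 t) (at t)" by (rule strong_solution_DERIV(1)[OF sol])
  qed
  have crit: "Dr 1 x = 0"
    using DERIV_local_max[OF strong_solution_DERIV(1)[OF sol x_in] \<open>\<delta> > 0\<close> local_max] .
  have "Dr 2 x > 0"
    using strong_solution_critical_point[OF rho sol x_in crit] \<open>r x > 0\<close> \<open>M \<ge> 1\<close> x_in by simp
  moreover have "Dr 2 x \<le> 0"
    using second_deriv_nonpos_at_local_max[OF \<open>\<delta> > 0\<close> deriv crit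
        strong_solution_DERIV(2)[OF sol x_in] local_max] .
  ultimately show False by simp
qed

theorem lemma2p3:
  fixes \<gamma> s0 \<kappa> :: real and \<rho> r :: "real \<Rightarrow> real" and Dr :: "nat \<Rightarrow> real \<Rightarrow> real" and M :: nat
  assumes "rho_assms \<gamma> s0 \<kappa> \<rho>"
    and "M \<ge> 1"
    and "strong_solution \<rho> M r Dr"
  shows "(\<forall>R\<in>{0..1}. r R \<ge> 0) \<and> (\<forall>R\<in>{0<..1}. Dr 1 R \<ge> 0)"
  using strong_solution_nonneg[OF assms] strong_solution_mono[OF assms] by blast

end
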